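(* Assume the general-case standing hypotheses, let $\sigma\in(0,1)$, $\mu^+=\sigma\mu$. For $(x,\lambda)\in\mathcal B((x^*,\lambda^* ),\delta)$ with $l<x<u$, $\lambda^l,\lambda^u>0$, let $(\Delta x^N,\Delta\lambda^{l,N},\Delta\lambda^{u,N})$ be the Newton direction, let $d_i=[\nabla^2f(x)]_{ii}+\frac{\lambda_i^l}{x_i-l_i}+\frac{\lambda^u_i}{u_i-x_i}$ and for $i$ with $d_i\neq0$ define $$\Delta x_i^S=-\frac{1}{d_i}\Big([\nabla f(x)]_i-\mu^+\Big[\frac1{x_i-l_i}-\frac1{u_i-x_i}\Big]\Big).$$ Then $\Delta x_i^S-\Delta x_i^N=\frac1{d_i}\sum_{j\ne i}[\nabla^2f(x)]_{ij}\Delta x_j^N$ for each such $i$. Moreover, for every $C_1>0$ there exist $\rho>0$, $\bar\mu\in(0,\hat\mu]$ and constants $0<c\le C$ such that for all $\mu\in(0,\bar\mu]$ and all such $(x,\lambda)$ with $\|(x,\lambda)-(x^\mu,\lambda^\mu)\|<\rho$ and $\|F_\mu(x,\lambda)\|\le C_1\mu$: $0<1/d_i\le C\mu$ for $i\in\mathcal A_x$, $c\le 1/d_i\le C$ for $i\in\mathcal I_x$, and $|\Delta x_i^S-\Delta x_i^N|\le C\mu^2$ for $i\in\mathcal A_x$.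
   Context: General problem: minimize $f(x)$ subject to $l\le x\le u$, $l,u\in\mathbb R^n$, $l<u$, $f$ twice continuously differentiable with locally Lipschitz Hessian; multipliers $\lambda=(\lambda^l,\lambda^u)$. $X=\mathrm{diag}(x)$, $L=\mathrm{diag}(l)$, $U=\mathrm{diag}(u)$, $\Lambda^l=\mathrm{diag}(\lambda^l)$, $\Lambda^u=\mathrm{diag}(\lambda^u)$, $e$ all-ones, Euclidean norms. $F_\mu(x,\lambda)=\begin{bmatrix}\nabla f(x)-\lambda^l+\lambda^u\\ \Lambda^l(X-L)e-\mu e\\ \Lambda^u(U-X)e-\mu e\end{bmatrix}$, $F'(x,\lambda)=\begin{bmatrix}\nabla^2f(x)&-I&I\\ \Lambda^l&X-L&0\\ -\Lambda^u&0&U-X\end{bmatrix}$. Newton direction: solution of $F'(x,\lambda)(\Delta x^N,\Delta\lambda^{l,N},\Delta\lambda^{u,N})=-F_{\mu^+}(x,\lambda)$. Sets: $\mathcal A_l=\{i:x^*_i=l_i\}$, $\mathcal A_u=\{i:x^*_i=u_i\}$, $\mathcal I_l,\mathcal I_u$ their complements, $\mathcal A_x=\mathcal A_l\cup\mathcal A_u$, $\mathcal I_x$ its complement. Standing hypotheses: $\nabla f(x^* )-\lambda^{l*}+\lambda^{u*}=0$, $l\le x^*\le u$, $\lambda^{l*},\lambda^{u*}\ge0$, $(x^*-l)_i\lambda^{l*}_i=0$, $(u-x^* )_i\lambda^{u*}_i=0$, $(x^*-l)+\lambda^{l*}>0$, $(u-x^* )+\lambda^{u*}>0$, $[\nabla^2f(x^*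 )]_{\mathcal I_x\mathcal I_x}\succ0$; $\delta>0$ with $F'$ nonsingular and boundedly invertible on $\mathcal B((x^*,\lambda^* ),\delta)$; $\hat\mu>0$ with a Lipschitz barrier trajectory $(x^\mu,\lambda^\mu)\in\mathcal B((x^*,\lambda^* ),\delta)$, $F_\mu(x^\mu,\lambda^\mu)=0$, $\|(x^\mu,\lambda^\mu)-(x^*,\lambda^* )\|\le C_4\mu$ for $\mu\in(0,\hat\mu]$. *)

theory Defs
  imports "HOL-Analysis.Analysis"
begin

text \<open>Primal-dual points (x, lambda^l, lambda^u) are elements of the product
  real^'n * real^'n * real^'n, whose product norm is the Euclidean norm of the
  stacked vector. g is the gradient of f and H its Hessian.\<close>

definition Fmu ::
  "(real^'n \<Rightarrow> real^'n) \<Rightarrow> real^'n \<Rightarrow> real^'n \<Rightarrow> real \<Rightarrow>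
   real^'n \<Rightarrow> real^'n \<Rightarrow> real^'n \<Rightarrow> (real^'n) \<times> (real^'n) \<times> (real^'n)" where
  "Fmu g l u mu x la lu =
     (g x - la + lu,
      (\<chi> i. la$i * (x$i - l$i) - mu),
      (\<chi> i. lu$i * (u$i - x$i) - mu))"

definition Fprime ::
  "(real^'n \<Rightarrow> real^'n^'n) \<Rightarrow> real^'n \<Rightarrow> real^'n \<Rightarrow>
   real^'n \<Rightarrow> real^'n \<Rightarrow> real^'n \<Rightarrow>
   real^'n \<Rightarrow> real^'n \<Rightarrow> real^'n \<Rightarrow> (real^'n) \<times> (real^'n) \<times> (real^'n)" where
  "Fprime H l u x la lu dx dla dlu =
     (H x *v dx - dla + dlu,
      (\<chi> i. la$i * dx$i + (x$i - l$i) * dla$i),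
      (\<chi> i. - lu$i * dx$i + (u$i - x$i) * dlu$i))"

definition dcoef ::
  "(real^'n \<Rightarrow> real^'n^'n) \<Rightarrow> real^'n \<Rightarrow> real^'n \<Rightarrow>
   real^'n \<Rightarrow> real^'n \<Rightarrow> real^'n \<Rightarrow> 'n \<Rightarrow> real" where
  "dcoef H l u x la lu i =
     H x $ i $ i + la$i / (x$i - l$i) + lu$i / (u$i - x$i)"

definition dxS ::
  "(real^'n \<Rightarrow> real^'n) \<Rightarrow> (real^'n \<Rightarrow> real^'n^'n) \<Rightarrow> real^'n \<Rightarrow> real^'n \<Rightarrow> real \<Rightarrow>
   real^'n \<Rightarrow> real^'n \<Rightarrow> real^'n \<Rightarrow> 'n \<Rightarrow> real" where
  "dxS g H l u mup x la lu i =
     - (1 / dcoef H l u x la lu i) *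
       (g x $ i - mup * (1 / (x$i - l$i) - 1 / (u$i - x$i)))"

end

theory Submission
  imports Defs
begin

text \<open>Eliminating the multiplier steps from the \<open>i\<close>-th rows of the Newton system gives
  \<open>d_i dx_i + (\<Sum>j\<noteq>i. H_ij dx_j) = -(g_i - \<mu>\<^sup>+ (1/(x_i - l_i) - 1/(u_i - x_i)))\<close>, so the
  diagonal step differs from the Newton step exactly by the off-diagonal coupling divided
  by \<open>d_i\<close>. Near the central path \<open>\<lambda>_i (x_i - l_i) = O(\<mu>)\<close>, while strict complementarity
  keeps \<open>\<lambda>_i\<close> away from zero at an active lower bound; hence the barrier term
  \<open>\<lambda>_i/(x_i - l_i) = \<lambda>_i\<^sup>2/(\<lambda>_i (x_i - l_i))\<close> is of order \<open>1/\<mu>\<close> and \<open>1/d_i = O(\<mu>)\<close>. At inactive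
  indices both barrier terms are bounded and the Hessian diagonal is positive by the second
  order condition. Finally \<open>\<parallel>dx\<parallel> = O(\<parallel>F\<^sub>\<mu>\<^sub>+\<parallel>) = O(\<mu>)\<close> by the bounded inverse of \<open>F'\<close>, so the
  deviation at active indices is \<open>O(\<mu>) \<cdot> O(\<mu>)\<close>.\<close>

lemma dxS_minus_newton_step_eq:
  fixes H :: "real^'n \<Rightarrow> real^'n^'n"
  assumes int: "\<forall>j. l$j < x$j \<and> x$j < u$j \<and> 0 < la$j \<and> 0 < lu$j"
    and newton: "Fprime H l u x la lu dx dla dlu = - Fmu g l u m x la lu"
    and d_nz: "dcoef H l u x la lu i \<noteq> 0"
  shows "dxS g H l u m x la lu i - dx$i =
           (1 / dcoef H l u x la lu i) * (\<Sum>j\<in>UNIV - {i}. H x $ i $ j * dx$j)"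
proof -
  define a where "a = x$i - l$i"
  define b where "b = u$i - x$i"
  define S where "S = (\<Sum>j\<in>UNIV - {i}. H x $ i $ j * dx$j)"
  define d where "d = dcoef H l u x la lu i"
  have a: "a > 0" and b: "b > 0" using int unfolding a_def b_def by (auto simp: algebra_simps)
  have row_x: "H x $ i $ i * dx$i + S - dla$i + dlu$i = - g x $ i + la$i - lu$i"
  proof -
    have "(H x *v dx - dla + dlu) $ i = - (g x - la + lu) $ i"
      using newton unfolding Fprime_def Fmu_def by (simp add: prod_eq_iff)
    moreover have "(H x *v dx) $ i = H x $ i $ i * dx$i + S"
      unfolding S_def matrix_vector_mult_def by (simp add: sum.remove)
    ultimately show ?thesis by simp
  qed
  have "la$i * dx$i + a * dla$i = - (la$i * a - m)"
    using newton unfolding Fprime_def Fmu_def a_def by (simp add: prod_eq_iff vec_eq_iff)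
  hence row_la: "dla$i = (m - la$i * a - la$i * dx$i) / a"
    using a by (simp add: field_simps)
  have "- lu$i * dx$i + b * dlu$i = - (lu$i * b - m)"
    using newton unfolding Fprime_def Fmu_def b_def by (simp add: prod_eq_iff vec_eq_iff)
  hence row_lu: "dlu$i = (m - lu$i * b + lu$i * dx$i) / b"
    using b by (simp add: field_simps)
  have d: "d = H x $ i $ i + la$i / a + lu$i / b"
    unfolding d_def dcoef_def a_def b_def by simp
  have S: "S = - (g x $ i - m * (1/a - 1/b)) - d * dx$i"
    unfolding d using row_x row_la row_lu a b by (simp add: field_simps) algebra
  show ?thesis
    unfolding dxS_def d_def[symmetric] S_def[symmetric] a_def[symmetric] b_def[symmetric]
    using S d_nz a b by (simp add: d_def[symmetric] field_simps) algebra
qed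

lemma abs_matrix_entry_le_norm:
  fixes A :: "real^'n^'m"
  shows "\<bar>A $ i $ j\<bar> \<le> norm A"
  by (meson component_le_norm_cart Finite_Cartesian_Product.norm_nth_le order_trans)

lemma abs_components_lt_of_norm_triple_lt:
  fixes a b c :: "real^'n"
  assumes "norm (a, b, c) < e"
  shows "\<bar>a$i\<bar> < e" "\<bar>b$i\<bar> < e" "\<bar>c$i\<bar> < e"
proof -
  have "norm a \<le> norm (a, b, c)" "norm b \<le> norm (a, b, c)" "norm c \<le> norm (a, b, c)"
    using norm_fst_le[of a "(b, c)"] norm_snd_le[of "(b, c)" a]
      norm_fst_le[of b c] norm_snd_le[of c b] by linarith+
  then show "\<bar>a$i\<bar> < e" "\<bar>b$i\<bar> < e" "\<bar>c$i\<bar> < e"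
    using assms component_le_norm_cart[of a i] component_le_norm_cart[of b i]
      component_le_norm_cart[of c i] by linarith+
qed

lemma complementarity_residual_le_norm_Fmu:
  "\<bar>la$i * (x$i - l$i) - m\<bar> \<le> norm (Fmu g l u m x la lu)"
  "\<bar>lu$i * (u$i - x$i) - m\<bar> \<le> norm (Fmu g l u m x la lu)"
proof -
  have "\<bar>la$i * (x$i - l$i) - m\<bar> \<le> norm (\<chi> i. la$i * (x$i - l$i) - m)"
    using component_le_norm_cart[of "\<chi> i. la$i * (x$i - l$i) - m" i] by simp
  also have "\<dots> \<le> norm (Fmu g l u m x la lu)"
    unfolding Fmu_def by (rule order_trans[OF norm_fst_le norm_snd_le])
  finally show "\<bar>la$i * (x$i - l$i) - m\<bar> \<le> norm (Fmu g l u m x la lu)" .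
  have "\<bar>lu$i * (u$i - x$i) - m\<bar> \<le> norm (\<chi> i. lu$i * (u$i - x$i) - m)"
    using component_le_norm_cart[of "\<chi> i. lu$i * (u$i - x$i) - m" i] by simp
  also have "\<dots> \<le> norm (Fmu g l u m x la lu)"
    unfolding Fmu_def by (rule order_trans[OF norm_snd_le norm_snd_le])
  finally show "\<bar>lu$i * (u$i - x$i) - m\<bar> \<le> norm (Fmu g l u m x la lu)" .
qed

lemma norm_Fmu_change_mu_le:
  fixes g :: "real^'n \<Rightarrow> real^'n"
  shows "norm (Fmu g l u m' x la lu)
           \<le> norm (Fmu g l u m x la lu) + 2 * real CARD('n) * \<bar>m - m'\<bar>"
proof -
  define v :: "real^'n" where "v = (\<chi> i. m - m')"
  have shift: "Fmu g l u m' x la lu = Fmu g l u m x la lu + (0, v, v)"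
    unfolding Fmu_def v_def by (simp add: vec_eq_iff algebra_simps)
  have "norm v \<le> (\<Sum>i\<in>UNIV. \<bar>v$i\<bar>)" by (rule norm_le_l1_cart)
  also have "\<dots> = real CARD('n) * \<bar>m - m'\<bar>" by (simp add: v_def)
  finally have v: "norm v \<le> real CARD('n) * \<bar>m - m'\<bar>" .
  have "norm ((0::real^'n), v, v) \<le> norm (0::real^'n) + norm (v, v)" by (rule norm_Pair_le)
  also have "\<dots> \<le> norm v + norm v" using norm_Pair_le[of v v] by simp
  finally have "norm ((0::real^'n), v, v) \<le> 2 * real CARD('n) * \<bar>m - m'\<bar>" using v by linarith
  then show ?thesis
    unfolding shift using norm_triangle_ineq[of "Fmu g l u m x la lu" "(0, v, v)"] by linarith
qed

lemma abs_offdiagonal_row_sum_le: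
  fixes A :: "real^'n^'n"
  assumes "\<forall>j. \<bar>A $ i $ j\<bar> \<le> B"
  shows "\<bar>\<Sum>j\<in>UNIV - {i}. A $ i $ j * v$j\<bar> \<le> real CARD('n) * B * norm v"
proof -
  have B: "0 \<le> B" using assms by (meson abs_ge_zero order_trans)
  have "\<bar>\<Sum>j\<in>UNIV - {i}. A $ i $ j * v$j\<bar> \<le> (\<Sum>j\<in>UNIV - {i}. \<bar>A $ i $ j * v$j\<bar>)"
    by (rule sum_abs)
  also have "\<dots> \<le> (\<Sum>j\<in>UNIV - {i}. B * norm v)"
  proof (rule sum_mono)
    fix j
    show "\<bar>A $ i $ j * v$j\<bar> \<le> B * norm v"
      unfolding abs_mult using assms B component_le_norm_cart[of v j] by (intro mult_mono) auto
  qed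
  also have "\<dots> \<le> (\<Sum>j\<in>(UNIV::'n set). B * norm v)"
    using sum_mono2[of "UNIV::'n set" "UNIV - {i}" "\<lambda>j. B * norm v"] B by simp
  finally show ?thesis by simp
qed

text \<open>Since \<open>p/t = p\<^sup>2/(p t)\<close>, a barrier term whose multiplier \<open>p\<close> stays above \<open>q\<close> while
  the complementarity product \<open>p t\<close> is \<open>O(\<mu>)\<close> is at least \<open>q\<^sup>2/(K \<mu>)\<close>; for small \<open>\<mu>\<close>
  it absorbs any bounded Hessian entry.\<close>
lemma inverse_barrier_sum_le_mu:
  fixes p t h r K mu q B :: real
  assumes t: "0 < t" and q: "0 < q" "q \<le> p" and pt: "p * t \<le> K * mu" and K: "0 < K"
    and mu: "0 < mu" and h: "- B \<le> h" and r: "0 \<le> r" and small: "B * (2 * K * mu) \<le> q\<^sup>2"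
  shows "0 < h + p/t + r" "1 / (h + p/t + r) \<le> (2 * K / q\<^sup>2) * mu"
proof -
  have p: "0 < p" using q by simp
  have "q\<^sup>2 / (K * mu) \<le> p\<^sup>2 / (p * t)"
    using q p t pt K mu by (intro frac_le) (auto intro: power_mono)
  also have "\<dots> = p / t" using p t by (simp add: power2_eq_square)
  finally have barrier: "q\<^sup>2 / (K * mu) \<le> p / t" .
  have "B \<le> q\<^sup>2 / (2 * K * mu)" using small K mu by (simp add: le_divide_eq mult.commute)
  then have low: "q\<^sup>2 / (2 * K * mu) \<le> h + p/t + r" using barrier h r by simp
  have pos: "0 < q\<^sup>2 / (2 * K * mu)" using q K mu by simp
  show "0 < h + p/t + r" using low pos by linarith
  have "1 / (h + p/t + r) \<le> 1 / (q\<^sup>2 / (2 * K * mu))" using low pos by (intro frac_le) auto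
  then show "1 / (h + p/t + r) \<le> (2 * K / q\<^sup>2) * mu" by simp
qed

lemma inverse_bounded_barrier_sum_bounds:
  fixes h B p t p' t' q :: real
  assumes h: "hm \<le> h" "h \<le> B" "0 < hm"
    and p: "0 \<le> p" "p \<le> q" "q \<le> t" and p': "0 \<le> p'" "p' \<le> q" "q \<le> t'" and q: "0 < q"
  shows "1 / (B + 2) \<le> 1 / (h + p/t + p'/t')" "1 / (h + p/t + p'/t') \<le> 1 / hm"
proof -
  have "0 \<le> p/t" "p/t \<le> 1" "0 \<le> p'/t'" "p'/t' \<le> 1"
    using p p' q by (auto simp: divide_le_eq)
  then have "hm \<le> h + p/t + p'/t'" "h + p/t + p'/t' \<le> B + 2" using h by linarith+
  then show "1 / (B + 2) \<le> 1 / (h + p/t + p'/t')" "1 / (h + p/t + p'/t') \<le> 1 / hm"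
    using h(3) by (auto intro: frac_le)
qed

lemma abs_dxS_minus_newton_step_le:
  fixes H :: "real^'n \<Rightarrow> real^'n^'n"
  assumes int: "\<forall>j. l$j < x$j \<and> x$j < u$j \<and> 0 < la$j \<and> 0 < lu$j"
    and newton: "Fprime H l u x la lu dx dla dlu = - Fmu g l u m x la lu"
    and d: "0 < dcoef H l u x la lu i" "1 / dcoef H l u x la lu i \<le> A"
    and H: "\<forall>j. \<bar>H x $ i $ j\<bar> \<le> B" and dx: "norm dx \<le> D"
  shows "\<bar>dxS g H l u m x la lu i - dx$i\<bar> \<le> A * (real CARD('n) * B * D)"
proof -
  define S where "S = (\<Sum>j\<in>UNIV - {i}. H x $ i $ j * dx$j)"
  have B: "0 \<le> B" using H by (meson abs_ge_zero order_trans)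
  have "\<bar>S\<bar> \<le> real CARD('n) * B * norm dx"
    unfolding S_def by (rule abs_offdiagonal_row_sum_le[OF H])
  also have "\<dots> \<le> real CARD('n) * B * D" using dx B by (intro mult_left_mono) auto
  finally have S: "\<bar>S\<bar> \<le> real CARD('n) * B * D" .
  have "\<bar>dxS g H l u m x la lu i - dx$i\<bar> = 1 / dcoef H l u x la lu i * \<bar>S\<bar>"
    using dxS_minus_newton_step_eq[OF int newton] d(1) unfolding S_def by (simp add: abs_mult)
  also have "\<dots> \<le> A * (real CARD('n) * B * D)"
  proof (rule mult_mono)
    show "0 \<le> A" using d by (smt (verit) divide_pos_pos)
  qed (use d S in auto)
  finally show ?thesis .
qed

lemma norm_newton_step_le:
  fixes g :: "real^'n \<Rightarrow> real^'n" and H :: "real^'n \<Rightarrow> real^'n^'n"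
  assumes inv: "\<forall>dx dla dlu. norm (dx, dla, dlu) \<le> M * norm (Fprime H l u x la lu dx dla dlu)"
    and M: "0 \<le> M"
    and newton: "Fprime H l u x la lu dx dla dlu = - Fmu g l u (\<sigma> * mu) x la lu"
    and Fmu_le: "norm (Fmu g l u mu x la lu) \<le> C1 * mu"
    and mu: "0 < mu" and sigma: "0 \<le> \<sigma>" "\<sigma> \<le> 1"
  shows "norm dx \<le> M * ((C1 + 2 * real CARD('n)) * mu)"
proof -
  have "\<bar>mu - \<sigma> * mu\<bar> \<le> mu" using mu sigma by (simp add: mult_le_cancel_right1)
  then have "2 * real CARD('n) * \<bar>mu - \<sigma> * mu\<bar> \<le> 2 * real CARD('n) * mu"
    by (intro mult_left_mono) auto
  then have "norm (Fmu g l u (\<sigma> * mu) x la lu) \<le> (C1 + 2 * real CARD('n)) * mu"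
    using norm_Fmu_change_mu_le[of g l u "\<sigma> * mu" x la lu mu] Fmu_le
    unfolding distrib_right by linarith
  then have "M * norm (Fmu g l u (\<sigma> * mu) x la lu) \<le> M * ((C1 + 2 * real CARD('n)) * mu)"
    using M by (rule mult_left_mono)
  moreover have "norm dx \<le> M * norm (Fmu g l u (\<sigma> * mu) x la lu)"
  proof -
    have "norm dx \<le> norm (dx, dla, dlu)" by (rule norm_fst_le)
    also have "\<dots> \<le> M * norm (Fprime H l u x la lu dx dla dlu)" using inv by blast
    finally show ?thesis unfolding newton by simp
  qed
  ultimately show ?thesis by linarith
qed

lemma diagonal_pos_of_restricted_pos_def:
  fixes A :: "real^'n^'n"
  assumes pos: "\<forall>v. v \<noteq> 0 \<and> (\<forall>k. P k \<longrightarrow> v$k = 0) \<longrightarrow> v \<bullet> (A *v v) > 0"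
    and "\<not> P i"
  shows "0 < A $ i $ i"
proof -
  have "axis i (1::real) \<noteq> 0" by simp
  moreover have "\<forall>k. P k \<longrightarrow> axis i (1::real) $ k = 0"
    using assms(2) by (auto simp: axis_def)
  ultimately have "axis i (1::real) \<bullet> (A *v axis i 1) > 0"
    using pos by blast
  moreover have "(A *v axis i 1) $ i = A $ i $ i"
    by (simp add: matrix_vector_mult_def axis_def if_distrib cong: if_cong)
  ultimately show ?thesis by (simp add: inner_axis')
qed

definition local_margins ::
  "(real^'n \<Rightarrow> real^'n^'n) \<Rightarrow> real^'n \<Rightarrow> real^'n \<Rightarrow> real^'n \<Rightarrow> real^'n \<Rightarrow> real^'n \<Rightarrow>
   real \<Rightarrow> real \<Rightarrow> real \<Rightarrow> real \<Rightarrow> bool" where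
  "local_margins H l u xs las lus e q h B \<longleftrightarrow>
     (\<forall>x la lu. norm ((x, la, lu) - (xs, las, lus)) < e \<longrightarrow>
        (\<forall>i. xs$i = l$i \<longrightarrow> q \<le> la$i) \<and>
        (\<forall>i. xs$i = u$i \<longrightarrow> q \<le> lu$i) \<and>
        (\<forall>i. \<not> (xs$i = l$i \<or> xs$i = u$i) \<longrightarrow>
           q \<le> x$i - l$i \<and> q \<le> u$i - x$i \<and> la$i \<le> q \<and> lu$i \<le> q \<and> h \<le> H x $ i $ i) \<and>
        (\<forall>i j. \<bar>H x $ i $ j\<bar> \<le> B))"

lemma finite_pos_lower_bound:
  fixes f :: "'i::finite \<Rightarrow> real"
  assumes "\<forall>i. 0 < f i"
  obtains m where "0 < m" "\<forall>i. m \<le> f i"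
  using assms by (intro that[of "Min (range f)"]) auto

lemma continuous_on_matrix_entries_close:
  fixes H :: "'a::metric_space \<Rightarrow> real^'n^'m"
  assumes "continuous_on UNIV H" "0 < \<epsilon>"
  obtains \<eta> where "0 < \<eta>" "\<And>x i j. dist x y < \<eta> \<Longrightarrow> \<bar>H x $ i $ j - H y $ i $ j\<bar> < \<epsilon>"
proof -
  obtain \<eta> where "0 < \<eta>" and \<eta>: "\<And>x. dist x y < \<eta> \<Longrightarrow> dist (H x) (H y) < \<epsilon>"
    using assms unfolding continuous_on_iff by blast
  show ?thesis
  proof (rule that[OF \<open>0 < \<eta>\<close>])
    fix x i j assume "dist x y < \<eta>"
    then show "\<bar>H x $ i $ j - H y $ i $ j\<bar> < \<epsilon>"
      using \<eta> abs_matrix_entry_le_norm[of "H x - H y" i j] by (fastforce simp: dist_norm)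
  qed
qed

lemma strict_complementarity_local_margins:
  fixes H :: "real^'n \<Rightarrow> real^'n^'n" and l u xs las lus :: "real^'n"
  assumes lu: "\<forall>i. l$i < u$i"
    and hess_cont: "continuous_on UNIV H"
    and feas: "\<forall>i. l$i \<le> xs$i \<and> xs$i \<le> u$i"
    and compl: "\<forall>i. (xs$i - l$i) * las$i = 0 \<and> (u$i - xs$i) * lus$i = 0"
    and strict: "\<forall>i. (xs$i - l$i) + las$i > 0 \<and> (u$i - xs$i) + lus$i > 0"
    and sosc: "\<forall>v. v \<noteq> 0 \<and> (\<forall>i. (xs$i = l$i \<or> xs$i = u$i) \<longrightarrow> v$i = 0)
                 \<longrightarrow> v \<bullet> (H xs *v v) > 0"
  obtains e q h B where "0 < e" "0 < q" "0 < h" "0 < B"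
    and "local_margins H l u xs las lus e q h B"
proof -
  define margin where
    "margin i = min (min ((xs$i - l$i) + las$i) ((u$i - xs$i) + lus$i)) (u$i - l$i)" for i
  have "\<forall>i. 0 < margin i" using strict lu by (simp add: margin_def)
  then obtain qm where qm: "0 < qm" "\<forall>i. qm \<le> margin i" by (rule finite_pos_lower_bound)
  define diag where "diag i = (if xs$i = l$i \<or> xs$i = u$i then 1 else H xs $ i $ i)" for i
  have "\<forall>i. 0 < diag i"
    using diagonal_pos_of_restricted_pos_def[OF sosc] by (simp add: diag_def)
  then obtain hm where hm: "0 < hm" "\<forall>i. hm \<le> diag i" by (rule finite_pos_lower_bound)
  have "0 < min 1 (hm/2)" using hm by simp
  then obtain \<eta> where \<eta>: "0 < \<eta>"
    and entries: "\<And>x i j. dist x xs < \<eta> \<Longrightarrow> \<bar>H x $ i $ j - H xs $ i $ j\<bar> < min 1 (hm/2)"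
    using continuous_on_matrix_entries_close[OF hess_cont, where y = xs] by blast
  define e where "e = min (qm/2) \<eta>"
  have close: "\<bar>x$i - xs$i\<bar> < qm/2 \<and> \<bar>la$i - las$i\<bar> < qm/2 \<and> \<bar>lu$i - lus$i\<bar> < qm/2 \<and>
      dist x xs < \<eta>" if "norm ((x, la, lu) - (xs, las, lus)) < e" for x la lu i
  proof -
    have *: "norm (x - xs, la - las, lu - lus) < e" using that by simp
    then have "norm (x - xs) < e" using norm_fst_le[of "x - xs" "(la - las, lu - lus)"] by linarith
    then show ?thesis
      using abs_components_lt_of_norm_triple_lt[OF *, of i] by (simp add: e_def dist_norm)
  qed
  have lower: "qm/2 \<le> la$i"
    if near: "norm ((x, la, lu) - (xs, las, lus)) < e" and "xs$i = l$i" for x la lu i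
  proof -
    have "qm \<le> las$i" using that qm(2)[rule_format, of i] by (simp add: margin_def)
    moreover have "\<bar>la$i - las$i\<bar> < qm/2" using close[OF near, of i] by blast
    ultimately show ?thesis by arith
  qed
  have upper: "qm/2 \<le> lu$i"
    if near: "norm ((x, la, lu) - (xs, las, lus)) < e" and "xs$i = u$i" for x la lu i
  proof -
    have "qm \<le> lus$i" using that qm(2)[rule_format, of i] by (simp add: margin_def)
    moreover have "\<bar>lu$i - lus$i\<bar> < qm/2" using close[OF near, of i] by blast
    ultimately show ?thesis by arith
  qed
  have inactive: "qm/2 \<le> x$i - l$i \<and> qm/2 \<le> u$i - x$i \<and> la$i \<le> qm/2 \<and> lu$i \<le> qm/2 \<and>
      hm/2 \<le> H x $ i $ i"
    if near: "norm ((x, la, lu) - (xs, las, lus)) < e" and inactive: "\<not> (xs$i = l$i \<or> xs$i = u$i)"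
    for x la lu i
  proof -
    have "las$i = 0" "lus$i = 0" using inactive feas compl by (auto simp: order.order_iff_strict)
    then have "qm \<le> xs$i - l$i" "qm \<le> u$i - xs$i"
      using qm(2)[rule_format, of i] by (simp_all add: margin_def)
    moreover have "hm \<le> H xs $ i $ i" using hm(2)[rule_format, of i] inactive by (simp add: diag_def)
    moreover have c: "\<bar>x$i - xs$i\<bar> < qm/2" "\<bar>la$i - las$i\<bar> < qm/2" "\<bar>lu$i - lus$i\<bar> < qm/2"
      "dist x xs < \<eta>"
      using close[OF near, of i] by auto
    moreover have "\<bar>H x $ i $ i - H xs $ i $ i\<bar> < hm/2" using entries[OF c(4), of i i] by simp
    ultimately show ?thesis using \<open>las$i = 0\<close> \<open>lus$i = 0\<close> by arith
  qed
  have bounded: "\<bar>H x $ i $ j\<bar> \<le> norm (H xs) + 1"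
    if "norm ((x, la, lu) - (xs, las, lus)) < e" for x la lu i j
    using close[OF that, of i] entries[of x i j] abs_matrix_entry_le_norm[of "H xs" i j]
    by (smt (verit))
  show ?thesis
  proof (rule that)
    show "0 < e" "0 < qm/2" "0 < hm/2" "0 < norm (H xs) + 1"
      using qm \<eta> hm by (auto simp: e_def add_nonneg_pos)
    show "local_margins H l u xs las lus e (qm/2) (hm/2) (norm (H xs) + 1)"
      unfolding local_margins_def using lower upper inactive bounded by blast
  qed
qed

lemma inverse_dcoef_le_mu_at_active:
  fixes g :: "real^'n \<Rightarrow> real^'n" and H :: "real^'n \<Rightarrow> real^'n^'n"
  assumes margins: "local_margins H l u xs las lus e q h B"
    and near: "norm ((x, la, lu) - (xs, las, lus)) < e"
    and int: "\<forall>j. l$j < x$j \<and> x$j < u$j \<and> 0 < la$j \<and> 0 < lu$j"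
    and q: "0 < q" and C1: "0 < C1" and mu: "0 < mu"
    and Fmu_le: "norm (Fmu g l u mu x la lu) \<le> C1 * mu"
    and small: "B * (2 * (C1 + 1) * mu) \<le> q\<^sup>2"
    and active: "xs$i = l$i \<or> xs$i = u$i"
  shows "0 < dcoef H l u x la lu i \<and> 1 / dcoef H l u x la lu i \<le> 2 * (C1 + 1) / q\<^sup>2 * mu"
proof -
  have "\<bar>H x $ i $ i\<bar> \<le> B" using margins near unfolding local_margins_def by blast
  then have H: "- B \<le> H x $ i $ i" by linarith
  have "\<bar>la$i * (x$i - l$i) - mu\<bar> \<le> C1 * mu" "\<bar>lu$i * (u$i - x$i) - mu\<bar> \<le> C1 * mu"
    using order_trans[OF complementarity_residual_le_norm_Fmu(1) Fmu_le]
      order_trans[OF complementarity_residual_le_norm_Fmu(2) Fmu_le] by blast+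
  then have products: "la$i * (x$i - l$i) \<le> (C1 + 1) * mu" "lu$i * (u$i - x$i) \<le> (C1 + 1) * mu"
    by (simp_all add: abs_le_iff algebra_simps)
  have int_i: "0 < x$i - l$i" "0 < u$i - x$i" "0 \<le> la$i / (x$i - l$i)" "0 \<le> lu$i / (u$i - x$i)"
    using int by (auto simp: less_imp_le)
  have K: "0 < C1 + 1" using C1 by simp
  from active show ?thesis
  proof
    assume "xs$i = l$i"
    then have "q \<le> la$i" using margins near unfolding local_margins_def by blast
    from inverse_barrier_sum_le_mu[OF int_i(1) q this products(1) K mu H int_i(4) small]
    show ?thesis
      unfolding dcoef_def by simp
  next
    assume "xs$i = u$i"
    then have "q \<le> lu$i" using margins near unfolding local_margins_def by blast
    moreover have "dcoef H l u x la lu i = H x $ i $ i + lu$i / (u$i - x$i) + la$i / (x$i - l$i)"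
      unfolding dcoef_def by simp
    ultimately show ?thesis
      using inverse_barrier_sum_le_mu[OF int_i(2) q _ products(2) K mu H int_i(3) small] by simp
  qed
qed

lemma inverse_dcoef_bounds_at_inactive:
  fixes H :: "real^'n \<Rightarrow> real^'n^'n"
  assumes margins: "local_margins H l u xs las lus e q h B"
    and near: "norm ((x, la, lu) - (xs, las, lus)) < e"
    and int: "\<forall>j. l$j < x$j \<and> x$j < u$j \<and> 0 < la$j \<and> 0 < lu$j"
    and q: "0 < q" and h: "0 < h"
    and inactive: "\<not> (xs$i = l$i \<or> xs$i = u$i)"
  shows "1 / (B + 2) \<le> 1 / dcoef H l u x la lu i \<and> 1 / dcoef H l u x la lu i \<le> 1 / h"
proof -
  have "h \<le> H x $ i $ i" "q \<le> x$i - l$i" "q \<le> u$i - x$i" "la$i \<le> q" "lu$i \<le> q"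
    "\<bar>H x $ i $ i\<bar> \<le> B"
    using margins near inactive unfolding local_margins_def by blast+
  moreover have "0 \<le> la$i" "0 \<le> lu$i" using int less_imp_le by blast+
  ultimately show ?thesis
    using inverse_bounded_barrier_sum_bounds[OF _ _ h _ _ _ _ _ _ q] unfolding dcoef_def
    by (meson abs_le_D1)
qed

lemma dcoef_estimates_at_point:
  fixes g :: "real^'n \<Rightarrow> real^'n" and H :: "real^'n \<Rightarrow> real^'n^'n"
  assumes margins: "local_margins H l u xs las lus e q h B"
    and near: "norm ((x, la, lu) - (xs, las, lus)) < e"
    and int: "\<forall>j. l$j < x$j \<and> x$j < u$j \<and> 0 < la$j \<and> 0 < lu$j"
    and q: "0 < q" and h: "0 < h" and C1: "0 < C1" and mu: "0 < mu"
    and Fmu_le: "norm (Fmu g l u mu x la lu) \<le> C1 * mu"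
    and small: "B * (2 * (C1 + 1) * mu) \<le> q\<^sup>2"
    and inv: "\<forall>dx dla dlu. norm (dx, dla, dlu) \<le> M * norm (Fprime H l u x la lu dx dla dlu)"
    and M: "0 \<le> M" and sigma: "0 \<le> \<sigma>" "\<sigma> \<le> 1"
    and C: "2 * (C1 + 1) / q\<^sup>2 \<le> C" "1 / h \<le> C"
      "2 * (C1 + 1) / q\<^sup>2 * (real CARD('n) * B * (M * (C1 + 2 * real CARD('n)))) \<le> C"
    and c: "c \<le> 1 / (B + 2)"
  shows "(\<forall>i. (xs$i = l$i \<or> xs$i = u$i) \<longrightarrow>
              0 < 1 / dcoef H l u x la lu i \<and> 1 / dcoef H l u x la lu i \<le> C * mu) \<and>
         (\<forall>i. \<not> (xs$i = l$i \<or> xs$i = u$i) \<longrightarrow>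
              c \<le> 1 / dcoef H l u x la lu i \<and> 1 / dcoef H l u x la lu i \<le> C) \<and>
         (\<forall>dxN dlN duN. Fprime H l u x la lu dxN dlN duN = - Fmu g l u (\<sigma> * mu) x la lu \<longrightarrow>
            (\<forall>i. (xs$i = l$i \<or> xs$i = u$i) \<longrightarrow>
               \<bar>dxS g H l u (\<sigma> * mu) x la lu i - dxN$i\<bar> \<le> C * mu\<^sup>2))"
proof -
  define A where "A = 2 * (C1 + 1) / q\<^sup>2"
  note active = inverse_dcoef_le_mu_at_active[OF margins near int q C1 mu Fmu_le small,
      folded A_def]
  have "A * mu \<le> C * mu" using C(1) mu unfolding A_def by (intro mult_right_mono) auto
  then have active_bounds: "0 < 1 / dcoef H l u x la lu i \<and> 1 / dcoef H l u x la lu i \<le> C * mu"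
    if "xs$i = l$i \<or> xs$i = u$i" for i
    using active[OF that] by auto
  have inactive_bounds: "c \<le> 1 / dcoef H l u x la lu i \<and> 1 / dcoef H l u x la lu i \<le> C"
    if "\<not> (xs$i = l$i \<or> xs$i = u$i)" for i
    using inverse_dcoef_bounds_at_inactive[OF margins near int q h that] c C(2) by linarith
  have deviation: "\<bar>dxS g H l u (\<sigma> * mu) x la lu i - dxN$i\<bar> \<le> C * mu\<^sup>2"
    if newton: "Fprime H l u x la lu dxN dlN duN = - Fmu g l u (\<sigma> * mu) x la lu"
      and "xs$i = l$i \<or> xs$i = u$i" for dxN dlN duN i
  proof -
    have "\<forall>j. \<bar>H x $ i $ j\<bar> \<le> B" using margins near unfolding local_margins_def by blast
    moreover have "norm dxN \<le> M * ((C1 + 2 * real CARD('n)) * mu)"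
      by (rule norm_newton_step_le[OF inv M newton Fmu_le mu sigma])
    ultimately have "\<bar>dxS g H l u (\<sigma> * mu) x la lu i - dxN$i\<bar>
        \<le> (A * mu) * (real CARD('n) * B * (M * ((C1 + 2 * real CARD('n)) * mu)))"
      using abs_dxS_minus_newton_step_le[OF int newton] active[OF that(2)] by blast
    also have "\<dots> = A * (real CARD('n) * B * (M * (C1 + 2 * real CARD('n)))) * mu\<^sup>2"
      by (simp add: power2_eq_square algebra_simps)
    also have "\<dots> \<le> C * mu\<^sup>2" using C(3) by (intro mult_right_mono) (auto simp: A_def)
    finally show ?thesis .
  qed
  show ?thesis using active_bounds inactive_bounds deviation by blast
qed

lemma dcoef_estimates_near_central_path:
  fixes g :: "real^'n \<Rightarrow> real^'n"
    and H :: "real^'n \<Rightarrow> real^'n^'n"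
    and l u xs las lus :: "real^'n"
    and traj :: "real \<Rightarrow> (real^'n) \<times> (real^'n) \<times> (real^'n)"
    and \<delta> muhat C4 \<sigma> C1 :: real
  assumes lu: "\<forall>i. l$i < u$i"
    and hess_cont: "continuous_on UNIV H"
    and feas: "\<forall>i. l$i \<le> xs$i \<and> xs$i \<le> u$i"
    and compl: "\<forall>i. (xs$i - l$i) * las$i = 0 \<and> (u$i - xs$i) * lus$i = 0"
    and strict: "\<forall>i. (xs$i - l$i) + las$i > 0 \<and> (u$i - xs$i) + lus$i > 0"
    and sosc: "\<forall>v. v \<noteq> 0 \<and> (\<forall>i. (xs$i = l$i \<or> xs$i = u$i) \<longrightarrow> v$i = 0)
                 \<longrightarrow> v \<bullet> (H xs *v v) > 0"
    and Fp_inv: "\<exists>M. \<forall>x la lu. (x, la, lu) \<in> ball (xs, las, lus) \<delta> \<longrightarrow>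
                   (\<forall>dx dla dlu. norm (dx, dla, dlu) \<le> M * norm (Fprime H l u x la lu dx dla dlu))"
    and muhat_pos: "muhat > 0"
    and traj_bound: "\<forall>mu\<in>{0<..muhat}. norm (traj mu - (xs, las, lus)) \<le> C4 * mu"
    and sigma: "0 < \<sigma>" "\<sigma> < 1"
    and C1: "C1 > 0"
  shows "\<exists>\<rho>>0. \<exists>mubar. 0 < mubar \<and> mubar \<le> muhat \<and> (\<exists>c C. 0 < c \<and> c \<le> C \<and>
        (\<forall>mu x la lu.
           0 < mu \<and> mu \<le> mubar \<and>
           (x, la, lu) \<in> ball (xs, las, lus) \<delta> \<and>
           (\<forall>j. l$j < x$j \<and> x$j < u$j \<and> 0 < la$j \<and> 0 < lu$j) \<and>
           norm ((x, la, lu) - traj mu) < \<rho> \<and>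
           norm (Fmu g l u mu x la lu) \<le> C1 * mu
           \<longrightarrow>
           (\<forall>i. (xs$i = l$i \<or> xs$i = u$i) \<longrightarrow>
                 0 < 1 / dcoef H l u x la lu i \<and> 1 / dcoef H l u x la lu i \<le> C * mu) \<and>
           (\<forall>i. \<not> (xs$i = l$i \<or> xs$i = u$i) \<longrightarrow>
                 c \<le> 1 / dcoef H l u x la lu i \<and> 1 / dcoef H l u x la lu i \<le> C) \<and>
           (\<forall>dxN dlN duN. Fprime H l u x la lu dxN dlN duN = - Fmu g l u (\<sigma> * mu) x la lu \<longrightarrow>
              (\<forall>i. (xs$i = l$i \<or> xs$i = u$i) \<longrightarrow>
                 \<bar>dxS g H l u (\<sigma> * mu) x la lu i - dxN$i\<bar> \<le> C * mu\<^sup>2))))"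
proof -
  obtain M where M: "\<forall>x la lu. (x, la, lu) \<in> ball (xs, las, lus) \<delta> \<longrightarrow>
      (\<forall>dx dla dlu. norm (dx, dla, dlu) \<le> M * norm (Fprime H l u x la lu dx dla dlu))"
    using Fp_inv by blast
  define M' where "M' = max M 0"
  have inv: "\<forall>dx dla dlu. norm (dx, dla, dlu) \<le> M' * norm (Fprime H l u x la lu dx dla dlu)"
    if "(x, la, lu) \<in> ball (xs, las, lus) \<delta>" for x la lu
  proof (intro allI)
    fix dx dla dlu
    have "norm (dx, dla, dlu) \<le> M * norm (Fprime H l u x la lu dx dla dlu)" using M that by blast
    also have "\<dots> \<le> M' * norm (Fprime H l u x la lu dx dla dlu)"
      by (intro mult_right_mono) (auto simp: M'_def)
    finally show "norm (dx, dla, dlu) \<le> M' * norm (Fprime H l u x la lu dx dla dlu)" .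
  qed
  obtain e q h B where pos: "0 < e" "0 < q" "0 < h" "0 < B"
    and margins: "local_margins H l u xs las lus e q h B"
    using strict_complementarity_local_margins[OF lu hess_cont feas compl strict sosc] by blast
  define C where "C = max (max (2 * (C1 + 1) / q\<^sup>2) (1 / h))
    (max (2 * (C1 + 1) / q\<^sup>2 * (real CARD('n) * B * (M' * (C1 + 2 * real CARD('n))))) (1 / (B + 2)))"
  define mubar where
    "mubar = min muhat (min (e / (2 * (\<bar>C4\<bar> + 1))) (q\<^sup>2 / (B * (2 * (C1 + 1)))))"
  have mubar: "0 < mubar" "mubar \<le> muhat"
    using muhat_pos pos C1 by (auto simp: mubar_def add_pos_nonneg)
  have near: "norm ((x, la, lu) - (xs, las, lus)) < e"
    if "0 < mu" "mu \<le> mubar" "norm ((x, la, lu) - traj mu) < e/2" for mu x la lu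
  proof -
    have "mu * (2 * (\<bar>C4\<bar> + 1)) \<le> e"
      using that(2) by (simp add: mubar_def le_divide_eq add_pos_nonneg)
    then have "2 * (\<bar>C4\<bar> * mu) + 2 * mu \<le> e" by (simp add: algebra_simps)
    moreover have "norm (traj mu - (xs, las, lus)) \<le> C4 * mu"
      using traj_bound that(1,2) mubar(2) by auto
    moreover have "C4 * mu \<le> \<bar>C4\<bar> * mu" using that(1) by (intro mult_right_mono) auto
    ultimately have "norm (traj mu - (xs, las, lus)) < e/2"
      using that(1) by linarith
    then have "norm ((x, la, lu) - (xs, las, lus)) < e/2 + e/2"
      by (rule norm_diff_triangle_less[OF that(3)])
    then show ?thesis by simp
  qed
  have small: "B * (2 * (C1 + 1) * mu) \<le> q\<^sup>2" if "mu \<le> mubar" for mu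
    using that pos C1 by (simp add: mubar_def le_divide_eq mult.commute mult.left_commute)
  have M': "0 \<le> M'" by (simp add: M'_def)
  have C: "2 * (C1 + 1) / q\<^sup>2 \<le> C" "1 / h \<le> C"
    "2 * (C1 + 1) / q\<^sup>2 * (real CARD('n) * B * (M' * (C1 + 2 * real CARD('n)))) \<le> C"
    "0 < 1 / (B + 2)" "1 / (B + 2) \<le> C"
    using pos by (simp_all add: C_def)
  note estimates = dcoef_estimates_at_point[OF margins near _ pos(2,3) C1 _ _ small inv M'
      less_imp_le[OF sigma(1)] less_imp_le[OF sigma(2)] C(1-3) order.refl]
  show ?thesis
    by (rule exI[of _ "e/2"], rule conjI[OF half_gt_zero[OF pos(1)]],
        rule exI[of _ mubar], rule conjI[OF mubar(1)], rule conjI[OF mubar(2)],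
        rule exI[of _ "1 / (B + 2)"], rule exI[of _ C], rule conjI[OF C(4)], rule conjI[OF C(5)],
        intro allI impI, elim conjE)
       (rule estimates)
qed

theorem mainTheorem8:
  fixes f :: "real^'n \<Rightarrow> real"
    and g :: "real^'n \<Rightarrow> real^'n"
    and H :: "real^'n \<Rightarrow> real^'n^'n"
    and l u xs las lus :: "real^'n"
    and traj :: "real \<Rightarrow> (real^'n) \<times> (real^'n) \<times> (real^'n)"
    and \<delta> muhat C4 \<sigma> :: real
  assumes lu: "\<forall>i. l$i < u$i"
    and grad: "\<forall>x. (f has_derivative (\<lambda>h. g x \<bullet> h)) (at x)"
    and hess: "\<forall>x. (g has_derivative (\<lambda>h. H x *v h)) (at x)"
    and hess_cont: "continuous_on UNIV H"
    and hess_lip: "\<forall>x. \<exists>r>0. \<exists>L. L-lipschitz_on (ball x r) H"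
    and kkt1: "g xs - las + lus = 0"
    and feas: "\<forall>i. l$i \<le> xs$i \<and> xs$i \<le> u$i"
    and mult_nonneg: "\<forall>i. 0 \<le> las$i \<and> 0 \<le> lus$i"
    and compl: "\<forall>i. (xs$i - l$i) * las$i = 0 \<and> (u$i - xs$i) * lus$i = 0"
    and strict: "\<forall>i. (xs$i - l$i) + las$i > 0 \<and> (u$i - xs$i) + lus$i > 0"
    and sosc: "\<forall>v. v \<noteq> 0 \<and> (\<forall>i. (xs$i = l$i \<or> xs$i = u$i) \<longrightarrow> v$i = 0)
                 \<longrightarrow> v \<bullet> (H xs *v v) > 0"
    and delta_pos: "\<delta> > 0"
    and Fp_inv: "\<exists>M. \<forall>x la lu. (x, la, lu) \<in> ball (xs, las, lus) \<delta> \<longrightarrow>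
                   (\<forall>dx dla dlu. norm (dx, dla, dlu) \<le> M * norm (Fprime H l u x la lu dx dla dlu))"
    and muhat_pos: "muhat > 0"
    and traj_lip: "\<exists>K. K-lipschitz_on {0<..muhat} traj"
    and traj_ball: "\<forall>mu\<in>{0<..muhat}. traj mu \<in> ball (xs, las, lus) \<delta>"
    and traj_F: "\<forall>mu\<in>{0<..muhat}.
                   Fmu g l u mu (fst (traj mu)) (fst (snd (traj mu))) (snd (snd (traj mu))) = 0"
    and traj_bound: "\<forall>mu\<in>{0<..muhat}. norm (traj mu - (xs, las, lus)) \<le> C4 * mu"
    and sigma: "0 < \<sigma>" "\<sigma> < 1"
  shows
    "(\<forall>mu x la lu dxN dlN duN i.
        (x, la, lu) \<in> ball (xs, las, lus) \<delta> \<and>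
        (\<forall>j. l$j < x$j \<and> x$j < u$j \<and> 0 < la$j \<and> 0 < lu$j) \<and>
        Fprime H l u x la lu dxN dlN duN = - Fmu g l u (\<sigma> * mu) x la lu \<and>
        dcoef H l u x la lu i \<noteq> 0
        \<longrightarrow> dxS g H l u (\<sigma> * mu) x la lu i - dxN$i =
            (1 / dcoef H l u x la lu i) * (\<Sum>j\<in>UNIV - {i}. H x $ i $ j * dxN$j))
     \<and>
     (\<forall>C1>0. \<exists>\<rho>>0. \<exists>mubar. 0 < mubar \<and> mubar \<le> muhat \<and> (\<exists>c C. 0 < c \<and> c \<le> C \<and>
        (\<forall>mu x la lu.
           0 < mu \<and> mu \<le> mubar \<and>
           (x, la, lu) \<in> ball (xs, las, lus) \<delta> \<and>
           (\<forall>j. l$j < x$j \<and> x$j < u$j \<and> 0 < la$j \<and> 0 < lu$j) \<and>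
           norm ((x, la, lu) - traj mu) < \<rho> \<and>
           norm (Fmu g l u mu x la lu) \<le> C1 * mu
           \<longrightarrow>
           (\<forall>i. (xs$i = l$i \<or> xs$i = u$i) \<longrightarrow>
                 0 < 1 / dcoef H l u x la lu i \<and> 1 / dcoef H l u x la lu i \<le> C * mu) \<and>
           (\<forall>i. \<not> (xs$i = l$i \<or> xs$i = u$i) \<longrightarrow>
                 c \<le> 1 / dcoef H l u x la lu i \<and> 1 / dcoef H l u x la lu i \<le> C) \<and>
           (\<forall>dxN dlN duN. Fprime H l u x la lu dxN dlN duN = - Fmu g l u (\<sigma> * mu) x la lu \<longrightarrow>
              (\<forall>i. (xs$i = l$i \<or> xs$i = u$i) \<longrightarrow>
                 \<bar>dxS g H l u (\<sigma> * mu) x la lu i - dxN$i\<bar> \<le> C * mu\<^sup>2)))))"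
  \<comment> \<open>Only continuity of the Hessian, the nondegeneracy at the solution, the bounded inverse
    of \<open>F'\<close> and the \<open>O(\<mu>)\<close> rate of the trajectory enter.\<close>
  by (intro conjI allI impI, (elim conjE)?)
    ((rule dxS_minus_newton_step_eq; assumption),
     rule dcoef_estimates_near_central_path[OF lu hess_cont feas compl strict sosc Fp_inv muhat_pos
       traj_bound sigma])

end
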